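(* Let $\alpha\in\mathbb N^n$ and let $\mathcal A=\{u_1,\ldots,u_m\}$ be a set of monomials of $S=K[x_1,\ldots,x_n]$, minimal with respect to divisibility, such that $K[\mathcal A]$ is a homogeneous $K$-algebra. Identify $S$ with $K[x_{11},\ldots,x_{n1}]\subset S^\alpha$ via $x_i\mapsto x_{i1}$, so that $\mathcal A\subseteq\mathcal A^\alpha$ and $S_{\mathcal A}\subseteq S_{\mathcal A^\alpha}$. If $\mathcal G$ is the reduced Gröbner basis of $I_{\mathcal A^\alpha}$ with respect to a term order $<$ on $S_{\mathcal A^\alpha}$, then $\mathcal G\cap S_{\mathcal A}$ is the reduced Gröbner basis of $I_{\mathcal A}$ with respect to the term order on $S_{\mathcal A}$ induced (by restriction) from $<$.
   Context: $\mathbb N$ denotes the positive integers. For $\alpha=(k_1,\ldots,k_n)$, $S^\alpha=K[x_{ij}:1\le i\le n,1\le j\le k_i]$, $\pi:S^\alpha\to S$, $x_{ij}\mapsto x_i$, and $\mathcal A^\alpha$ is the set of monomials $w\in S^\alpha$ with $\pi(w)\in\mathcal A$. For a finite set $\mathcal B$ of monomials, $S_{\mathcal B}=K[y_u:u\in\mathcal B]$ is a polynomial ring, $K[\mathcal B]$ the $K$-algebra generated by $\mathcal B$, and the toric ideal $I_{\mathcal B}$ is the kernel of $S_{\mathcal B}\to K[\mathcal B]$, $y_u\mapsto u$. *)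

theory Defs
  imports Complex_Main "HOL-Library.Poly_Mapping"
begin

(* Monomials in variables of type 'v are exponent vectors 'v \<Rightarrow>\<^sub>0 nat;
polynomials with coefficients in 'k are ('v \<Rightarrow>\<^sub>0 nat) \<Rightarrow>\<^sub>0 'k
(convolution product from Poly_Mapping).  A polynomial ring K[x_v : v \<in> V]
is the set of polynomials all of whose monomials only involve variables in V. *)

definition mon_in :: "'v set \<Rightarrow> ('v \<Rightarrow>\<^sub>0 nat) \<Rightarrow> bool" where
  "mon_in V m \<longleftrightarrow> Poly_Mapping.keys m \<subseteq> V"

definition poly_in :: "'v set \<Rightarrow> (('v \<Rightarrow>\<^sub>0 nat) \<Rightarrow>\<^sub>0 'k::zero) \<Rightarrow> bool" where
  "poly_in V p \<longleftrightarrow> (\<forall>m\<in>Poly_Mapping.keys p. mon_in V m)"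

definition mdvd :: "('v \<Rightarrow>\<^sub>0 nat) \<Rightarrow> ('v \<Rightarrow>\<^sub>0 nat) \<Rightarrow> bool" where
  "mdvd a b \<longleftrightarrow> (\<exists>c. b = a + c)"

definition rename_mon :: "('v \<Rightarrow> 'w) \<Rightarrow> ('v \<Rightarrow>\<^sub>0 nat) \<Rightarrow> ('w \<Rightarrow>\<^sub>0 nat)" where
  "rename_mon f m = (\<Sum>v\<in>Poly_Mapping.keys m. Poly_Mapping.single (f v) (Poly_Mapping.lookup m v))"

definition rename_poly :: "('v \<Rightarrow> 'w) \<Rightarrow> (('v \<Rightarrow>\<^sub>0 nat) \<Rightarrow>\<^sub>0 'k::comm_monoid_add)
    \<Rightarrow> (('w \<Rightarrow>\<^sub>0 nat) \<Rightarrow>\<^sub>0 'k)" where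
  "rename_poly f p = (\<Sum>m\<in>Poly_Mapping.keys p. Poly_Mapping.single (rename_mon f m) (Poly_Mapping.lookup p m))"

(* Toric map S_B \<rightarrow> K[B], y_u \<mapsto> u (a K-algebra homomorphism given by
substitution), and the toric ideal I_B as its kernel in S_B = K[y_u : u \<in> B]. *)
definition toric_map :: "('v \<Rightarrow>\<^sub>0 nat) set \<Rightarrow> ((('v \<Rightarrow>\<^sub>0 nat) \<Rightarrow>\<^sub>0 nat) \<Rightarrow>\<^sub>0 'k::comm_ring_1)
    \<Rightarrow> (('v \<Rightarrow>\<^sub>0 nat) \<Rightarrow>\<^sub>0 'k)" where
  "toric_map B p = (\<Sum>m\<in>Poly_Mapping.keys p. Poly_Mapping.single 0 (Poly_Mapping.lookup p m) *
        (\<Prod>u\<in>Poly_Mapping.keys m. (Poly_Mapping.single u 1) ^ Poly_Mapping.lookup m u))"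

definition toric_ideal :: "('v \<Rightarrow>\<^sub>0 nat) set
    \<Rightarrow> ((('v \<Rightarrow>\<^sub>0 nat) \<Rightarrow>\<^sub>0 nat) \<Rightarrow>\<^sub>0 'k::comm_ring_1) set" where
  "toric_ideal B = {p. poly_in B p \<and> toric_map B p = 0}"

definition term_order :: "'v set \<Rightarrow> (('v \<Rightarrow>\<^sub>0 nat) \<Rightarrow> ('v \<Rightarrow>\<^sub>0 nat) \<Rightarrow> bool) \<Rightarrow> bool" where
  "term_order V lt \<longleftrightarrow>
     (\<forall>a. mon_in V a \<longrightarrow> \<not> lt a a) \<and>
     (\<forall>a b c. mon_in V a \<longrightarrow> mon_in V b \<longrightarrow> mon_in V c \<longrightarrow> lt a b \<longrightarrow> lt b c \<longrightarrow> lt a c) \<and>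
     (\<forall>a b. mon_in V a \<longrightarrow> mon_in V b \<longrightarrow> a \<noteq> b \<longrightarrow> lt a b \<or> lt b a) \<and>
     (\<forall>a. mon_in V a \<longrightarrow> a \<noteq> 0 \<longrightarrow> lt 0 a) \<and>
     (\<forall>a b c. mon_in V a \<longrightarrow> mon_in V b \<longrightarrow> mon_in V c \<longrightarrow> lt a b \<longrightarrow> lt (a + c) (b + c))"

definition lm :: "(('v \<Rightarrow>\<^sub>0 nat) \<Rightarrow> ('v \<Rightarrow>\<^sub>0 nat) \<Rightarrow> bool) \<Rightarrow> (('v \<Rightarrow>\<^sub>0 nat) \<Rightarrow>\<^sub>0 'k::zero)
    \<Rightarrow> ('v \<Rightarrow>\<^sub>0 nat)" where
  "lm lt p = (THE m. m \<in> Poly_Mapping.keys p \<and> (\<forall>m'\<in>Poly_Mapping.keys p. m' \<noteq> m \<longrightarrow> lt m' m))"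

definition lc :: "(('v \<Rightarrow>\<^sub>0 nat) \<Rightarrow> ('v \<Rightarrow>\<^sub>0 nat) \<Rightarrow> bool) \<Rightarrow> (('v \<Rightarrow>\<^sub>0 nat) \<Rightarrow>\<^sub>0 'k::zero) \<Rightarrow> 'k" where
  "lc lt p = Poly_Mapping.lookup p (lm lt p)"

definition is_reduced_GB :: "(('v \<Rightarrow>\<^sub>0 nat) \<Rightarrow> ('v \<Rightarrow>\<^sub>0 nat) \<Rightarrow> bool)
    \<Rightarrow> (('v \<Rightarrow>\<^sub>0 nat) \<Rightarrow>\<^sub>0 'k::{zero,one}) set \<Rightarrow> (('v \<Rightarrow>\<^sub>0 nat) \<Rightarrow>\<^sub>0 'k) set \<Rightarrow> bool" where
  "is_reduced_GB lt I G \<longleftrightarrow>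
     finite G \<and> G \<subseteq> I \<and> 0 \<notin> G \<and>
     (\<forall>f\<in>I. f \<noteq> 0 \<longrightarrow> (\<exists>g\<in>G. mdvd (lm lt g) (lm lt f))) \<and>
     (\<forall>g\<in>G. lc lt g = 1) \<and>
     (\<forall>g\<in>G. \<forall>g'\<in>G. g' \<noteq> g \<longrightarrow> (\<forall>m\<in>Poly_Mapping.keys g. \<not> mdvd (lm lt g') m))"

(* Expansion data: S = K[x_1..x_n], alpha = (k_1..k_n) with k_i \<ge> 1,
S^alpha = K[x_ij : 1 \<le> i \<le> n, 1 \<le> j \<le> k_i]; pi : x_ij \<mapsto> x_i. *)
definition exp_vars :: "nat \<Rightarrow> (nat \<Rightarrow> nat) \<Rightarrow> (nat \<times> nat) set" where
  "exp_vars n k = {(i, j). 1 \<le> i \<and> i \<le> n \<and> 1 \<le> j \<and> j \<le> k i}"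

definition exp_pi :: "((nat \<times> nat) \<Rightarrow>\<^sub>0 nat) \<Rightarrow> (nat \<Rightarrow>\<^sub>0 nat)" where
  "exp_pi w = rename_mon fst w"

definition exp_incl :: "(nat \<Rightarrow>\<^sub>0 nat) \<Rightarrow> ((nat \<times> nat) \<Rightarrow>\<^sub>0 nat)" where
  "exp_incl u = rename_mon (\<lambda>i. (i, 1)) u"

definition expansion :: "nat \<Rightarrow> (nat \<Rightarrow> nat) \<Rightarrow> (nat \<Rightarrow>\<^sub>0 nat) set \<Rightarrow> ((nat \<times> nat) \<Rightarrow>\<^sub>0 nat) set" where
  "expansion n k A = {w. mon_in (exp_vars n k) w \<and> exp_pi w \<in> A}"

(* K[A] is a homogeneous K-algebra: there is a rational weight vector c with <c,a> = 1 for all a \<in> A. *)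
definition homogeneous_toric :: "nat \<Rightarrow> (nat \<Rightarrow>\<^sub>0 nat) set \<Rightarrow> bool" where
  "homogeneous_toric n A \<longleftrightarrow> (\<exists>c :: nat \<Rightarrow> rat. \<forall>a\<in>A. (\<Sum>i=1..n. c i * of_nat (Poly_Mapping.lookup a i)) = 1)"

end

(* Under x_i |-> x_i1, A is identified with the elements of A^alpha supported on the variables
   x_11, ..., x_n1.  Exponents being nonnegative, a monomial of S_(A^alpha) is sent by the toric
   map into K[x_11, ..., x_n1] iff all its factors come from A; as the toric map respects image
   monomials, the part of any element of I_(A^alpha) lying outside S_A is again in I_(A^alpha).
   For a reduced Groebner basis element g with leading monomial in S_A, that part is supported
   on non-leading monomials of g, so if it were nonzero its leading monomial would be divisible
   by the leading monomial of some basis element: reducedness excludes all elements but g, and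
   the term order excludes g.  Thus such g lie in S_A, and a basis element whose leading monomial
   divides one in S_A is of this kind.  Renaming variables along the injective embedding
   transports the result from the image of A back to A. *)
theory Submission
  imports Defs
begin

section \<open>Pushforward of finitely supported functions\<close>

definition pushforward :: "('a \<Rightarrow> 'b) \<Rightarrow> ('a \<Rightarrow>\<^sub>0 'c::comm_monoid_add) \<Rightarrow> ('b \<Rightarrow>\<^sub>0 'c)" where
  "pushforward h q = (\<Sum>x\<in>Poly_Mapping.keys q. Poly_Mapping.single (h x) (Poly_Mapping.lookup q x))"

lemma pushforward_eq_sum_superset:
  assumes "finite X" "Poly_Mapping.keys q \<subseteq> X"
  shows "pushforward h q = (\<Sum>x\<in>X. Poly_Mapping.single (h x) (Poly_Mapping.lookup q x))"
  unfolding pushforward_def using assms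
  by (intro sum.mono_neutral_left) (auto simp: in_keys_iff)

lemma lookup_pushforward:
  assumes "finite X" "Poly_Mapping.keys q \<subseteq> X"
  shows "Poly_Mapping.lookup (pushforward h q) y = (\<Sum>x\<in>X. Poly_Mapping.lookup q x when h x = y)"
  by (simp add: pushforward_eq_sum_superset[OF assms] lookup_sum lookup_single)

lemma pushforward_zero [simp]: "pushforward h 0 = 0"
  by (simp add: pushforward_def)

lemma pushforward_single [simp]: "pushforward h (Poly_Mapping.single x c) = Poly_Mapping.single (h x) c"
  by (simp add: pushforward_eq_sum_superset[of "{x}"])

lemma pushforward_add: "pushforward h (p + q) = pushforward h p + pushforward h q"
  unfolding pushforward_def by (rule setsum_keys_plus_distrib) (simp_all add: single_add)

lemma pushforward_sum: "pushforward h (\<Sum>s\<in>S. f s) = (\<Sum>s\<in>S. pushforward h (f s))"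
  by (induction S rule: infinite_finite_induct) (simp_all add: pushforward_add)

lemma pushforward_comp: "pushforward g (pushforward h q) = pushforward (g \<circ> h) q"
  by (simp add: pushforward_def[of h] pushforward_sum) (simp add: pushforward_def)

lemma lookup_pushforward_inj:
  assumes "inj h"
  shows "Poly_Mapping.lookup (pushforward h q) (h x) = Poly_Mapping.lookup q x"
  using assms by (simp add: lookup_pushforward[OF finite_keys subset_refl] inj_eq when_def in_keys_iff)

lemma lookup_pushforward_not_in_range:
  "y \<notin> range h \<Longrightarrow> Poly_Mapping.lookup (pushforward h q) y = 0"
  by (auto simp: lookup_pushforward[OF finite_keys subset_refl] when_def image_iff intro!: sum.neutral)

lemma keys_pushforward: "inj h \<Longrightarrow> Poly_Mapping.keys (pushforward h q) = h ` Poly_Mapping.keys q"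
proof (intro set_eqI iffI)
  fix y assume "inj h" and y: "y \<in> Poly_Mapping.keys (pushforward h q)"
  then obtain x where "y = h x"
    using lookup_pushforward_not_in_range by (metis in_keys_iff rangeE)
  with \<open>inj h\<close> y show "y \<in> h ` Poly_Mapping.keys q"
    by (simp add: in_keys_iff lookup_pushforward_inj)
qed (auto simp: in_keys_iff lookup_pushforward_inj)

lemma pushforward_id: "pushforward (\<lambda>x. x) q = q"
  by (rule poly_mapping_eqI) (metis inj_on_id2 lookup_pushforward_inj)

lemma map_key_pushforward: "inj h \<Longrightarrow> Poly_Mapping.map_key h (pushforward h q) = q"
  by (rule poly_mapping_eqI) (simp add: map_key.rep_eq lookup_pushforward_inj)

lemma inj_pushforward: "inj h \<Longrightarrow> inj (pushforward h)"
  by (metis injI map_key_pushforward)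

lemma pushforward_eq_0_iff: "inj h \<Longrightarrow> pushforward h q = 0 \<longleftrightarrow> q = 0"
  using inj_pushforward[of h] by (metis injD pushforward_zero)

lemma pushforward_map_key:
  assumes "inj h" "Poly_Mapping.keys q \<subseteq> range h"
  shows "pushforward h (Poly_Mapping.map_key h q) = q"
proof (rule poly_mapping_eqI)
  fix y
  show "Poly_Mapping.lookup (pushforward h (Poly_Mapping.map_key h q)) y = Poly_Mapping.lookup q y"
  proof (cases "y \<in> range h")
    case True
    then show ?thesis using assms(1) by (auto simp: lookup_pushforward_inj map_key.rep_eq)
  next
    case False
    then show ?thesis using assms(2) by (auto simp: lookup_pushforward_not_in_range in_keys_iff)
  qed
qed

lemma mdvd_pushforward_iff:
  assumes "inj h"
  shows "mdvd (pushforward h a) (pushforward h b) \<longleftrightarrow> mdvd a b"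
proof
  assume "mdvd (pushforward h a) (pushforward h b)"
  then obtain c where "pushforward h b = pushforward h a + c" by (auto simp: mdvd_def)
  then have "b = a + Poly_Mapping.map_key h c"
    using assms by (metis map_key_plus map_key_pushforward)
  then show "mdvd a b" by (auto simp: mdvd_def)
qed (auto simp: mdvd_def pushforward_add)

definition restrict_keys :: "'a set \<Rightarrow> ('a \<Rightarrow>\<^sub>0 'b::zero) \<Rightarrow> ('a \<Rightarrow>\<^sub>0 'b)" where
  "restrict_keys X q = Abs_poly_mapping (\<lambda>x. Poly_Mapping.lookup q x when x \<in> X)"

lemma lookup_restrict_keys:
  "Poly_Mapping.lookup (restrict_keys X q) x = (Poly_Mapping.lookup q x when x \<in> X)"
proof -
  have "finite {x. (Poly_Mapping.lookup q x when x \<in> X) \<noteq> 0}"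
    by (rule finite_subset[OF _ finite_keys[of q]]) (auto simp: in_keys_iff)
  then show ?thesis by (simp add: restrict_keys_def)
qed

lemma keys_restrict_keys: "Poly_Mapping.keys (restrict_keys X q) = Poly_Mapping.keys q \<inter> X"
  by (auto simp: in_keys_iff lookup_restrict_keys)

lemma restrict_keys_zero [simp]: "restrict_keys X 0 = 0"
  using keys_restrict_keys[of X 0] by simp

lemma pushforward_restrict_keys_vimage:
  "pushforward h (restrict_keys (h -` Y) q) = restrict_keys Y (pushforward h q)"
proof (rule poly_mapping_eqI)
  fix y
  have "Poly_Mapping.keys (restrict_keys (h -` Y) q) \<subseteq> Poly_Mapping.keys q"
    by (simp add: keys_restrict_keys)
  then have "Poly_Mapping.lookup (pushforward h (restrict_keys (h -` Y) q)) y =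
      (\<Sum>x\<in>Poly_Mapping.keys q. (Poly_Mapping.lookup q x when h x \<in> Y) when h x = y)"
    by (simp add: lookup_pushforward[OF finite_keys] lookup_restrict_keys)
  also have "\<dots> = Poly_Mapping.lookup (restrict_keys Y (pushforward h q)) y"
    by (auto simp: lookup_restrict_keys lookup_pushforward[OF finite_keys subset_refl] when_def
        intro: sum.cong sum.neutral)
  finally show "Poly_Mapping.lookup (pushforward h (restrict_keys (h -` Y) q)) y =
      Poly_Mapping.lookup (restrict_keys Y (pushforward h q)) y" .
qed

section \<open>Term orders and leading monomials\<close>

lemma term_orderD:
  assumes "term_order V lt"
  shows term_order_irrefl: "mon_in V a \<Longrightarrow> \<not> lt a a"
    and term_order_trans: "mon_in V a \<Longrightarrow> mon_in V b \<Longrightarrow> mon_in V c \<Longrightarrow> lt a b \<Longrightarrow> lt b c \<Longrightarrow> lt a c"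
    and term_order_total: "mon_in V a \<Longrightarrow> mon_in V b \<Longrightarrow> a \<noteq> b \<Longrightarrow> lt a b \<or> lt b a"
    and term_order_zero_least: "mon_in V a \<Longrightarrow> a \<noteq> 0 \<Longrightarrow> lt 0 a"
    and term_order_add_right: "mon_in V a \<Longrightarrow> mon_in V b \<Longrightarrow> mon_in V c \<Longrightarrow> lt a b \<Longrightarrow> lt (a + c) (b + c)"
  using assms unfolding term_order_def by blast+

lemma term_order_subset: "V \<subseteq> W \<Longrightarrow> term_order W lt \<Longrightarrow> term_order V lt"
  unfolding term_order_def mon_in_def by (meson order_trans)

lemma keys_add_nat: "Poly_Mapping.keys (a + b :: 'a \<Rightarrow>\<^sub>0 nat) = Poly_Mapping.keys a \<union> Poly_Mapping.keys b"
  by (auto simp: in_keys_iff lookup_add)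

lemma term_order_pullback:
  assumes "inj h" and ord: "term_order (h ` V) lt"
  shows "term_order V (\<lambda>a b. lt (pushforward h a) (pushforward h b))"
proof -
  let ?h = "pushforward h :: (_ \<Rightarrow>\<^sub>0 nat) \<Rightarrow> _"
  have mon: "mon_in (h ` V) (?h a)" if "mon_in V a" for a
    using that \<open>inj h\<close> by (auto simp: mon_in_def keys_pushforward)
  have inj: "inj ?h" by (rule inj_pushforward[OF \<open>inj h\<close>])
  show ?thesis
    unfolding term_order_def
  proof (intro conjI allI impI)
    fix a assume "mon_in V a"
    then show "\<not> lt (?h a) (?h a)" by (intro term_order_irrefl[OF ord] mon)
  next
    fix a b c assume "mon_in V a" "mon_in V b" "mon_in V c" "lt (?h a) (?h b)" "lt (?h b) (?h c)"
    then show "lt (?h a) (?h c)" using term_order_trans[OF ord] mon by blast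
  next
    fix a b assume "mon_in V a" "mon_in V b" "a \<noteq> b"
    then show "lt (?h a) (?h b) \<or> lt (?h b) (?h a)"
      using term_order_total[OF ord] mon inj_eq[OF inj] by blast
  next
    fix a assume "mon_in V a" "a \<noteq> 0"
    then show "lt (?h 0) (?h a)"
      using term_order_zero_least[OF ord mon] pushforward_eq_0_iff[OF \<open>inj h\<close>] by auto
  next
    fix a b c assume "mon_in V a" "mon_in V b" "mon_in V c" "lt (?h a) (?h b)"
    then show "lt (?h (a + c)) (?h (b + c))"
      using term_order_add_right[OF ord] mon by (simp add: pushforward_add)
  qed
qed

lemma lt_of_mdvd:
  assumes "term_order V lt" "mon_in V b" "mdvd a b" "a \<noteq> b"
  shows "lt a b"
proof -
  obtain c where b: "b = a + c" using assms(3) by (auto simp: mdvd_def)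
  with assms(2) have "mon_in V a" "mon_in V c" by (auto simp: mon_in_def keys_add_nat)
  moreover have "c \<noteq> 0" using b assms(4) by auto
  moreover have "mon_in V 0" by (simp add: mon_in_def)
  ultimately have "lt (0 + a) (c + a)"
    by (meson term_order_add_right term_order_zero_least assms(1))
  then show ?thesis by (simp add: b add.commute)
qed

lemma lm_eqI:
  assumes "term_order V lt" "poly_in V p" "m \<in> Poly_Mapping.keys p"
    and "\<And>m'. m' \<in> Poly_Mapping.keys p \<Longrightarrow> m' \<noteq> m \<Longrightarrow> lt m' m"
  shows "lm lt p = m"
  unfolding lm_def
proof (rule the_equality)
  fix m2 assume m2: "m2 \<in> Poly_Mapping.keys p \<and> (\<forall>m'\<in>Poly_Mapping.keys p. m' \<noteq> m2 \<longrightarrow> lt m' m2)"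
  show "m2 = m"
  proof (rule ccontr)
    assume "m2 \<noteq> m"
    then have "lt m m2" "lt m2 m" using m2 assms(3,4) by auto
    moreover have "mon_in V m" "mon_in V m2" using assms(2,3) m2 by (auto simp: poly_in_def)
    ultimately show False using term_order_irrefl[OF assms(1)] term_order_trans[OF assms(1)] by blast
  qed
qed (use assms(3,4) in blast)

lemma lm_greatest:
  assumes "term_order V lt" "poly_in V p" "p \<noteq> 0"
  shows lm_in_keys: "lm lt p \<in> Poly_Mapping.keys p"
    and lt_lm: "\<And>m. m \<in> Poly_Mapping.keys p \<Longrightarrow> m \<noteq> lm lt p \<Longrightarrow> lt m (lm lt p)"
proof -
  have mon: "mon_in V m" if "m \<in> Poly_Mapping.keys p" for m
    using assms(2) that by (auto simp: poly_in_def)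
  have asym: "asymp_on (Poly_Mapping.keys p) lt"
    by (rule asymp_onI) (meson mon term_order_irrefl[OF assms(1)] term_order_trans[OF assms(1)])
  have trans: "transp_on (Poly_Mapping.keys p) lt"
    by (rule transp_onI) (meson mon term_order_trans[OF assms(1)])
  have "Poly_Mapping.keys p \<noteq> {}" using assms(3) by simp
  then obtain m where m: "m \<in> Poly_Mapping.keys p"
    and maximal: "\<forall>m'\<in>Poly_Mapping.keys p. m' \<noteq> m \<longrightarrow> \<not> lt m m'"
    using Finite_Set.bex_max_element[OF finite_keys asym trans] by blast
  have greatest: "lt m' m" if "m' \<in> Poly_Mapping.keys p" "m' \<noteq> m" for m'
    using that m maximal term_order_total[OF assms(1) mon mon] by blast
  have "lm lt p = m" by (rule lm_eqI[OF assms(1,2) m greatest])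
  then show "lm lt p \<in> Poly_Mapping.keys p"
    and "\<And>m'. m' \<in> Poly_Mapping.keys p \<Longrightarrow> m' \<noteq> lm lt p \<Longrightarrow> lt m' (lm lt p)"
    using m greatest by auto
qed

section \<open>Renaming variables\<close>

lemma rename_mon_eq_pushforward: "rename_mon f = pushforward f"
  by (simp add: fun_eq_iff rename_mon_def pushforward_def)

lemma rename_poly_eq_pushforward: "rename_poly f = pushforward (pushforward f)"
  by (simp add: fun_eq_iff rename_poly_def pushforward_def rename_mon_eq_pushforward)

lemma poly_in_pushforward:
  assumes "inj h" "poly_in V p"
  shows "poly_in (h ` V) (pushforward (pushforward h) p)"
  using assms by (auto simp: poly_in_def mon_in_def keys_pushforward inj_pushforward)

lemma poly_in_image_pushforward:
  assumes "inj h" "poly_in (h ` V) q"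
  obtains p where "poly_in V p" "pushforward (pushforward h) p = q"
proof
  have inj: "inj (pushforward h :: _ \<Rightarrow> (_ \<Rightarrow>\<^sub>0 nat))" by (rule inj_pushforward[OF assms(1)])
  have "M = pushforward h (Poly_Mapping.map_key h M)" if "M \<in> Poly_Mapping.keys q" for M
    using that assms by (intro pushforward_map_key[symmetric]) (fastforce simp: poly_in_def mon_in_def)+
  then have "Poly_Mapping.keys q \<subseteq> range (pushforward h)" by blast
  then show "pushforward (pushforward h) (Poly_Mapping.map_key (pushforward h) q) = q"
    by (rule pushforward_map_key[OF inj])
  show "poly_in V (Poly_Mapping.map_key (pushforward h) q)"
    unfolding poly_in_def mon_in_def
  proof
    fix m assume "m \<in> Poly_Mapping.keys (Poly_Mapping.map_key (pushforward h) q)"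
    then have "pushforward h m \<in> Poly_Mapping.keys q" by (simp add: keys_map_key[OF inj])
    then have "Poly_Mapping.keys (pushforward h m) \<subseteq> h ` V"
      using assms(2) by (auto simp: poly_in_def mon_in_def)
    then have "h ` Poly_Mapping.keys m \<subseteq> h ` V" by (simp add: keys_pushforward[OF assms(1)])
    then show "Poly_Mapping.keys m \<subseteq> V" by (simp add: inj_image_subset_iff[OF assms(1)])
  qed
qed

lemma lm_pushforward:
  assumes "inj h" and ord: "term_order (h ` V) lt" and "poly_in V p" "p \<noteq> 0"
  shows "lm lt (pushforward (pushforward h) p) = pushforward h (lm (\<lambda>a b. lt (pushforward h a) (pushforward h b)) p)"
proof -
  let ?lt = "\<lambda>a b. lt (pushforward h a) (pushforward h b)"
  have ord': "term_order V ?lt" by (rule term_order_pullback[OF assms(1,2)])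
  have inj: "inj (pushforward h :: _ \<Rightarrow> (_ \<Rightarrow>\<^sub>0 nat))" by (rule inj_pushforward[OF assms(1)])
  show ?thesis
  proof (rule lm_eqI[OF ord poly_in_pushforward[OF assms(1,3)]])
    show "pushforward h (lm ?lt p) \<in> Poly_Mapping.keys (pushforward (pushforward h) p)"
      using lm_in_keys[OF ord' assms(3,4)] by (simp add: keys_pushforward[OF inj])
    fix M assume "M \<in> Poly_Mapping.keys (pushforward (pushforward h) p)" "M \<noteq> pushforward h (lm ?lt p)"
    then show "lt M (pushforward h (lm ?lt p))"
      using lt_lm[OF ord' assms(3,4)] by (auto simp: keys_pushforward[OF inj])
  qed
qed

lemma lc_pushforward:
  assumes "inj h" and "term_order (h ` V) lt" and "poly_in V p" "p \<noteq> 0"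
  shows "lc lt (pushforward (pushforward h) p) = lc (\<lambda>a b. lt (pushforward h a) (pushforward h b)) p"
  using assms by (simp add: lc_def lm_pushforward lookup_pushforward_inj inj_pushforward)

section \<open>Toric maps\<close>

definition toric_monomial :: "(('v \<Rightarrow>\<^sub>0 nat) \<Rightarrow>\<^sub>0 nat) \<Rightarrow> ('v \<Rightarrow>\<^sub>0 nat)" where
  "toric_monomial M = (\<Sum>u\<in>Poly_Mapping.keys M. \<Sum>j<Poly_Mapping.lookup M u. u)"

lemma lookup_toric_monomial:
  "Poly_Mapping.lookup (toric_monomial M) x = (\<Sum>u\<in>Poly_Mapping.keys M. Poly_Mapping.lookup M u * Poly_Mapping.lookup u x)"
  by (simp add: toric_monomial_def lookup_sum)

lemma keys_toric_monomial: "Poly_Mapping.keys (toric_monomial M) = (\<Union>u\<in>Poly_Mapping.keys M. Poly_Mapping.keys u)"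
  by (auto simp: in_keys_iff lookup_toric_monomial) (metis in_keys_iff neq0_conv)

lemma single_one_power:
  "Poly_Mapping.single u (1::'k::comm_semiring_1) ^ e = Poly_Mapping.single (\<Sum>j<e. u) 1"
  by (induction e) (simp_all add: mult_single add.commute)

lemma toric_map_eq_pushforward:
  fixes p :: "(('v \<Rightarrow>\<^sub>0 nat) \<Rightarrow>\<^sub>0 nat) \<Rightarrow>\<^sub>0 'k::comm_ring_1"
  shows "toric_map B p = pushforward toric_monomial p"
proof -
  have prod: "(\<Prod>u\<in>U. Poly_Mapping.single u (1::'k) ^ e u) = Poly_Mapping.single (\<Sum>u\<in>U. \<Sum>j<e u. u) 1"
    if "finite U" for U and e :: "_ \<Rightarrow> nat"
    using that by (induction U rule: finite_induct) (simp_all add: single_one_power mult_single)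
  show ?thesis
    unfolding toric_map_def pushforward_def
    by (intro sum.cong) (simp_all add: prod mult_single toric_monomial_def)
qed

lemma toric_monomial_pushforward:
  assumes "inj f"
  shows "toric_monomial (pushforward (pushforward f) M) = pushforward f (toric_monomial M)"
proof -
  have inj: "inj (pushforward f :: _ \<Rightarrow> (_ \<Rightarrow>\<^sub>0 nat))" by (rule inj_pushforward[OF assms])
  have "toric_monomial (pushforward (pushforward f) M) =
      (\<Sum>u\<in>Poly_Mapping.keys M. \<Sum>j<Poly_Mapping.lookup M u. pushforward f u)"
    unfolding toric_monomial_def keys_pushforward[OF inj]
    by (simp add: sum.reindex[OF inj_on_subset[OF inj subset_UNIV]] lookup_pushforward_inj[OF inj])
  also have "\<dots> = pushforward f (toric_monomial M)"
    by (simp add: toric_monomial_def pushforward_sum)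
  finally show ?thesis .
qed

lemma toric_map_pushforward:
  fixes p :: "(('u \<Rightarrow>\<^sub>0 nat) \<Rightarrow>\<^sub>0 nat) \<Rightarrow>\<^sub>0 'k::comm_ring_1"
  assumes "inj f"
  shows "toric_map B' (pushforward (pushforward (pushforward f)) p) = pushforward (pushforward f) (toric_map B p)"
  by (simp add: toric_map_eq_pushforward pushforward_comp comp_def toric_monomial_pushforward[OF assms])

lemma pushforward_in_toric_ideal_iff:
  fixes p :: "(('u \<Rightarrow>\<^sub>0 nat) \<Rightarrow>\<^sub>0 nat) \<Rightarrow>\<^sub>0 'k::comm_ring_1"
  assumes "inj f" "poly_in A p"
  shows "pushforward (pushforward (pushforward f)) p \<in> toric_ideal (pushforward f ` A) \<longleftrightarrow> p \<in> toric_ideal A"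
  using assms(2) poly_in_pushforward[OF inj_pushforward[OF assms(1)] assms(2)]
    toric_map_pushforward[OF assms(1), of "pushforward f ` A" p A]
  by (simp add: toric_ideal_def pushforward_eq_0_iff[OF inj_pushforward[OF assms(1)]])

section \<open>Reduced Groebner bases under renaming and restriction\<close>

lemma is_reduced_GBD:
  assumes "is_reduced_GB lt I G"
  shows reduced_GB_finite: "finite G"
    and reduced_GB_subset: "G \<subseteq> I"
    and reduced_GB_nonzero: "0 \<notin> G"
    and reduced_GB_lm_dvd: "f \<in> I \<Longrightarrow> f \<noteq> 0 \<Longrightarrow> \<exists>g\<in>G. mdvd (lm lt g) (lm lt f)"
    and reduced_GB_monic: "g \<in> G \<Longrightarrow> lc lt g = 1"
    and reduced_GB_reduced:
      "g \<in> G \<Longrightarrow> g' \<in> G \<Longrightarrow> g' \<noteq> g \<Longrightarrow> m \<in> Poly_Mapping.keys g \<Longrightarrow> \<not> mdvd (lm lt g') m"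
  using assms unfolding is_reduced_GB_def by blast+

lemma is_reduced_GBI:
  assumes "finite G" "G \<subseteq> I" "0 \<notin> G"
    and "\<And>f. f \<in> I \<Longrightarrow> f \<noteq> 0 \<Longrightarrow> \<exists>g\<in>G. mdvd (lm lt g) (lm lt f)"
    and "\<And>g. g \<in> G \<Longrightarrow> lc lt g = 1"
    and "\<And>g g' m. g \<in> G \<Longrightarrow> g' \<in> G \<Longrightarrow> g' \<noteq> g \<Longrightarrow> m \<in> Poly_Mapping.keys g \<Longrightarrow> \<not> mdvd (lm lt g') m"
  shows "is_reduced_GB lt I G"
  using assms unfolding is_reduced_GB_def by blast

lemma reduced_GB_pullback_lm_dvd:
  fixes f :: "'u \<Rightarrow> 'v" and A :: "('u \<Rightarrow>\<^sub>0 nat) set"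
    and G :: "((('v \<Rightarrow>\<^sub>0 nat) \<Rightarrow>\<^sub>0 nat) \<Rightarrow>\<^sub>0 'k::comm_ring_1) set"
    and p :: "(('u \<Rightarrow>\<^sub>0 nat) \<Rightarrow>\<^sub>0 nat) \<Rightarrow>\<^sub>0 'k"
  assumes "inj f" and ord: "term_order (pushforward f ` A) lt"
    and GB: "is_reduced_GB lt (toric_ideal (pushforward f ` A)) G"
    and "p \<in> toric_ideal A" "p \<noteq> 0"
  obtains g where "poly_in A g" "pushforward (pushforward (pushforward f)) g \<in> G"
    and "mdvd (lm (\<lambda>a b. lt (pushforward (pushforward f) a) (pushforward (pushforward f) b)) g)
              (lm (\<lambda>a b. lt (pushforward (pushforward f) a) (pushforward (pushforward f) b)) p)"
proof -
  let ?i = "pushforward f :: ('u \<Rightarrow>\<^sub>0 nat) \<Rightarrow> _"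
  let ?R = "pushforward (pushforward ?i) :: _ \<Rightarrow> ((('v \<Rightarrow>\<^sub>0 nat) \<Rightarrow>\<^sub>0 nat) \<Rightarrow>\<^sub>0 'k)"
  let ?lt = "\<lambda>a b. lt (pushforward ?i a) (pushforward ?i b)"
  have inj: "inj ?i" by (rule inj_pushforward[OF \<open>inj f\<close>])
  have p: "poly_in A p" "?R p \<in> toric_ideal (?i ` A)" "?R p \<noteq> 0"
    using assms(4,5) pushforward_in_toric_ideal_iff[OF \<open>inj f\<close>] pushforward_eq_0_iff[OF inj_pushforward[OF inj]]
    by (auto simp: toric_ideal_def)
  then obtain g where g: "g \<in> G" "mdvd (lm lt g) (lm lt (?R p))"
    using reduced_GB_lm_dvd[OF GB] by blast
  then have "poly_in (?i ` A) g" using reduced_GB_subset[OF GB] by (auto simp: toric_ideal_def)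
  then obtain g0 where g0: "poly_in A g0" "?R g0 = g" by (rule poly_in_image_pushforward[OF inj])
  have "g0 \<noteq> 0" using g(1) g0(2) reduced_GB_nonzero[OF GB] by auto
  then have "lm lt g = pushforward ?i (lm ?lt g0)" using lm_pushforward[OF inj ord g0(1)] g0(2) by simp
  moreover have "lm lt (?R p) = pushforward ?i (lm ?lt p)" using lm_pushforward[OF inj ord p(1) \<open>p \<noteq> 0\<close>] .
  ultimately have "mdvd (lm ?lt g0) (lm ?lt p)"
    using g(2) by (simp add: mdvd_pushforward_iff[OF inj])
  then show ?thesis using that g0 g(1) by blast
qed

theorem is_reduced_GB_rename:
  fixes f :: "'u \<Rightarrow> 'v" and A :: "('u \<Rightarrow>\<^sub>0 nat) set"
    and G :: "((('v \<Rightarrow>\<^sub>0 nat) \<Rightarrow>\<^sub>0 nat) \<Rightarrow>\<^sub>0 'k::comm_ring_1) set"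
  assumes "inj f" and ord: "term_order (rename_mon f ` A) lt"
    and GB: "is_reduced_GB lt (toric_ideal (rename_mon f ` A)) G"
  shows "is_reduced_GB (\<lambda>m m'. lt (rename_mon (rename_mon f) m) (rename_mon (rename_mon f) m'))
           (toric_ideal A) {p. poly_in A p \<and> rename_poly (rename_mon f) p \<in> G}"
proof -
  let ?i = "pushforward f :: ('u \<Rightarrow>\<^sub>0 nat) \<Rightarrow> _"
  let ?R = "pushforward (pushforward ?i) :: _ \<Rightarrow> ((('v \<Rightarrow>\<^sub>0 nat) \<Rightarrow>\<^sub>0 nat) \<Rightarrow>\<^sub>0 'k)"
  let ?lt = "\<lambda>a b. lt (pushforward ?i a) (pushforward ?i b)"
  let ?G = "{p. poly_in A p \<and> ?R p \<in> G}"
  have inj: "inj ?i" by (rule inj_pushforward[OF \<open>inj f\<close>])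
  have injR: "inj ?R" by (intro inj_pushforward inj)
  note ord = ord[unfolded rename_mon_eq_pushforward]
  note GB = GB[unfolded rename_mon_eq_pushforward]
  have nonzero: "p \<noteq> 0" if "p \<in> ?G" for p
    using that reduced_GB_nonzero[OF GB] by auto
  have lm: "lm lt (?R p) = pushforward ?i (lm ?lt p)" if "p \<in> ?G" for p
    using lm_pushforward[OF inj ord] that nonzero[OF that] by blast
  show ?thesis
    unfolding rename_mon_eq_pushforward rename_poly_eq_pushforward
  proof (rule is_reduced_GBI)
    show "finite ?G"
      using finite_vimageI[OF reduced_GB_finite[OF GB] injR] by (rule finite_subset[rotated]) auto
    show "?G \<subseteq> toric_ideal A"
      using reduced_GB_subset[OF GB] pushforward_in_toric_ideal_iff[OF \<open>inj f\<close>] by blast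
    show "0 \<notin> ?G" using nonzero by blast
  next
    fix p :: "(('u \<Rightarrow>\<^sub>0 nat) \<Rightarrow>\<^sub>0 nat) \<Rightarrow>\<^sub>0 'k"
    assume "p \<in> toric_ideal A" "p \<noteq> 0"
    then obtain g where "poly_in A g" "?R g \<in> G" "mdvd (lm ?lt g) (lm ?lt p)"
      by (rule reduced_GB_pullback_lm_dvd[OF \<open>inj f\<close> ord GB])
    then show "\<exists>g\<in>?G. mdvd (lm ?lt g) (lm ?lt p)" by blast
  next
    fix g assume g: "g \<in> ?G"
    then have "lc ?lt g = lc lt (?R g)" using lc_pushforward[OF inj ord _ nonzero[OF g]] by simp
    also have "\<dots> = 1" using g reduced_GB_monic[OF GB] by simp
    finally show "lc ?lt g = 1" .
  next
    fix g g' m assume g: "g \<in> ?G" and g': "g' \<in> ?G" and "g' \<noteq> g" "m \<in> Poly_Mapping.keys g"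
    then have "?R g' \<noteq> ?R g" "pushforward ?i m \<in> Poly_Mapping.keys (?R g)"
      using injR by (auto simp: inj_eq keys_pushforward[OF inj_pushforward[OF inj]])
    show "\<not> mdvd (lm ?lt g') m"
    proof
      assume "mdvd (lm ?lt g') m"
      then have "mdvd (lm lt (?R g')) (pushforward ?i m)"
        using lm[OF g'] by (simp add: mdvd_pushforward_iff[OF inj])
      then show False
        using reduced_GB_reduced[OF GB] g g' \<open>?R g' \<noteq> ?R g\<close> \<open>pushforward ?i m \<in> _\<close> by blast
    qed
  qed
qed

lemma reduced_GB_tail_in_ideal_eq_0:
  assumes ord: "term_order V lt" and GB: "is_reduced_GB lt I G"
    and I: "\<And>f. f \<in> I \<Longrightarrow> poly_in V f"
    and "g \<in> G" "h \<in> I" "Poly_Mapping.keys h \<subseteq> Poly_Mapping.keys g" "lm lt g \<notin> Poly_Mapping.keys h"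
  shows "h = 0"
proof (rule ccontr)
  assume "h \<noteq> 0"
  have g: "poly_in V g" "g \<noteq> 0"
    using I \<open>g \<in> G\<close> reduced_GB_subset[OF GB] reduced_GB_nonzero[OF GB] by blast+
  let ?L = "lm lt h"
  have L: "?L \<in> Poly_Mapping.keys g" "?L \<noteq> lm lt g" "mon_in V ?L"
    using lm_in_keys[OF ord I[OF \<open>h \<in> I\<close>] \<open>h \<noteq> 0\<close>] assms(6,7) g(1) by (auto simp: poly_in_def)
  obtain g' where "g' \<in> G" "mdvd (lm lt g') ?L"
    using reduced_GB_lm_dvd[OF GB \<open>h \<in> I\<close> \<open>h \<noteq> 0\<close>] by blast
  then have "mdvd (lm lt g) ?L"
    using reduced_GB_reduced[OF GB \<open>g \<in> G\<close>] L(1) by blast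
  then have "lt (lm lt g) ?L" by (rule lt_of_mdvd[OF ord L(3) _ L(2)[symmetric]])
  moreover have "lt ?L (lm lt g)" by (rule lt_lm[OF ord g L(1,2)])
  moreover have "mon_in V (lm lt g)" using lm_in_keys[OF ord g] g(1) by (auto simp: poly_in_def)
  ultimately show False
    using term_order_irrefl[OF ord L(3)] term_order_trans[OF ord L(3) _ L(3)] by blast
qed

lemma reduced_GB_element_in_pure_subring:
  fixes G :: "((('v \<Rightarrow>\<^sub>0 nat) \<Rightarrow>\<^sub>0 nat) \<Rightarrow>\<^sub>0 'k::comm_ring_1) set"
  assumes ord: "term_order E lt" and GB: "is_reduced_GB lt (toric_ideal E) G"
    and "g \<in> G" and lm: "mon_in {w \<in> E. Poly_Mapping.keys w \<subseteq> C} (lm lt g)"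
  shows "poly_in {w \<in> E. Poly_Mapping.keys w \<subseteq> C} g"
proof -
  let ?B = "{w \<in> E. Poly_Mapping.keys w \<subseteq> C}"
  let ?Y = "{b. \<not> Poly_Mapping.keys b \<subseteq> C}"
  let ?h = "restrict_keys (toric_monomial -` ?Y) g"
  have g: "poly_in E g" "toric_map E g = 0"
    using \<open>g \<in> G\<close> reduced_GB_subset[OF GB] by (auto simp: toric_ideal_def)
  have mon_in_iff: "mon_in ?B M \<longleftrightarrow> toric_monomial M \<notin> ?Y" if "M \<in> Poly_Mapping.keys g" for M
    using that g(1) by (auto simp: poly_in_def mon_in_def keys_toric_monomial)
  have "toric_map E ?h = restrict_keys ?Y (toric_map E g)"
    by (simp only: toric_map_eq_pushforward pushforward_restrict_keys_vimage)
  then have "?h \<in> toric_ideal E"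
    using g by (auto simp: toric_ideal_def poly_in_def keys_restrict_keys)
  moreover have "lm lt g \<notin> Poly_Mapping.keys ?h"
    using mon_in_iff lm by (auto simp: keys_restrict_keys)
  ultimately have "?h = 0"
    using reduced_GB_tail_in_ideal_eq_0[OF ord GB _ \<open>g \<in> G\<close>]
    by (auto simp: toric_ideal_def keys_restrict_keys)
  then have "Poly_Mapping.keys g \<inter> toric_monomial -` ?Y = {}"
    by (metis keys_restrict_keys keys_zero)
  then show ?thesis
    using mon_in_iff unfolding poly_in_def by blast
qed

theorem is_reduced_GB_restrict:
  fixes E :: "('v \<Rightarrow>\<^sub>0 nat) set" and C :: "'v set"
    and G :: "((('v \<Rightarrow>\<^sub>0 nat) \<Rightarrow>\<^sub>0 nat) \<Rightarrow>\<^sub>0 'k::comm_ring_1) set"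
  assumes ord: "term_order E lt" and GB: "is_reduced_GB lt (toric_ideal E) G"
  defines "B \<equiv> {w \<in> E. Poly_Mapping.keys w \<subseteq> C}"
  shows "is_reduced_GB lt (toric_ideal B) {g \<in> G. poly_in B g}"
proof -
  have toric_ideal_B: "toric_ideal B = {f \<in> toric_ideal E. poly_in B f}"
    by (auto simp: toric_ideal_def toric_map_eq_pushforward poly_in_def mon_in_def B_def)
  show ?thesis
  proof (rule is_reduced_GBI)
    show "finite {g \<in> G. poly_in B g}" using reduced_GB_finite[OF GB] by simp
    show "{g \<in> G. poly_in B g} \<subseteq> toric_ideal B"
      using reduced_GB_subset[OF GB] by (auto simp: toric_ideal_B)
    show "0 \<notin> {g \<in> G. poly_in B g}" using reduced_GB_nonzero[OF GB] by simp
  next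
    fix f :: "(('v \<Rightarrow>\<^sub>0 nat) \<Rightarrow>\<^sub>0 nat) \<Rightarrow>\<^sub>0 'k"
    assume "f \<in> toric_ideal B" "f \<noteq> 0"
    then have f: "f \<in> toric_ideal E" "poly_in B f" by (auto simp: toric_ideal_B)
    then have "poly_in E f" by (simp add: toric_ideal_def)
    obtain g where g: "g \<in> G" "mdvd (lm lt g) (lm lt f)"
      using reduced_GB_lm_dvd[OF GB f(1) \<open>f \<noteq> 0\<close>] by blast
    have "mon_in B (lm lt f)"
      using lm_in_keys[OF ord \<open>poly_in E f\<close> \<open>f \<noteq> 0\<close>] f(2) by (auto simp: poly_in_def)
    with g(2) have "mon_in B (lm lt g)" by (auto simp: mdvd_def mon_in_def keys_add_nat)
    then have "poly_in B g"
      unfolding B_def by (rule reduced_GB_element_in_pure_subring[OF ord GB g(1)])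
    with g show "\<exists>g\<in>{g \<in> G. poly_in B g}. mdvd (lm lt g) (lm lt f)" by blast
  qed (use reduced_GB_monic[OF GB] reduced_GB_reduced[OF GB] in auto)
qed

lemma exp_incl_image:
  assumes alpha: "\<forall>i\<in>{1..n}. 1 \<le> k i" and A_mons: "\<forall>u\<in>A. mon_in {1..n} u"
  shows "exp_incl ` A = {w \<in> expansion n k A. Poly_Mapping.keys w \<subseteq> range (\<lambda>i. (i, 1))}"
proof -
  let ?incl = "\<lambda>i::nat. (i, 1::nat)"
  have inj: "inj ?incl" by (simp add: inj_def)
  have incl: "exp_incl = pushforward ?incl"
    by (simp add: fun_eq_iff exp_incl_def rename_mon_eq_pushforward)
  have pi_incl: "exp_pi (exp_incl u) = u" for u
    by (simp add: exp_pi_def incl rename_mon_eq_pushforward pushforward_comp comp_def pushforward_id)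
  show ?thesis
  proof (intro set_eqI iffI)
    fix w assume "w \<in> exp_incl ` A"
    then obtain u where u: "u \<in> A" "w = exp_incl u" by blast
    have keys: "Poly_Mapping.keys w = ?incl ` Poly_Mapping.keys u"
      unfolding u(2) incl by (rule keys_pushforward[OF inj])
    moreover have "Poly_Mapping.keys u \<subseteq> {1..n}" using A_mons u(1) by (simp add: mon_in_def)
    ultimately have "mon_in (exp_vars n k) w" using alpha by (auto simp: mon_in_def exp_vars_def)
    then show "w \<in> {w \<in> expansion n k A. Poly_Mapping.keys w \<subseteq> range ?incl}"
      using u keys pi_incl by (auto simp: expansion_def)
  next
    fix w assume w: "w \<in> {w \<in> expansion n k A. Poly_Mapping.keys w \<subseteq> range ?incl}"
    then have "pushforward ?incl (Poly_Mapping.map_key ?incl w) = w"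
      by (intro pushforward_map_key[OF inj]) simp
    then have "w = exp_incl (Poly_Mapping.map_key ?incl w)" by (simp add: incl)
    moreover from this have "Poly_Mapping.map_key ?incl w \<in> A"
      using w pi_incl by (metis (no_types, lifting) expansion_def mem_Collect_eq)
    ultimately show "w \<in> exp_incl ` A" by blast
  qed
qed

theorem proposition2p9:
  fixes n :: nat and k :: "nat \<Rightarrow> nat" and A :: "(nat \<Rightarrow>\<^sub>0 nat) set"
    and lt :: "(((nat \<times> nat) \<Rightarrow>\<^sub>0 nat) \<Rightarrow>\<^sub>0 nat) \<Rightarrow> (((nat \<times> nat) \<Rightarrow>\<^sub>0 nat) \<Rightarrow>\<^sub>0 nat) \<Rightarrow> bool"
    and G :: "((((nat \<times> nat) \<Rightarrow>\<^sub>0 nat) \<Rightarrow>\<^sub>0 nat) \<Rightarrow>\<^sub>0 'k::field) set"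
  assumes alpha: "\<forall>i\<in>{1..n}. 1 \<le> k i"
    and A_fin: "finite A"
    and A_mons: "\<forall>u\<in>A. mon_in {1..n} u"
    and A_min: "\<forall>u\<in>A. \<forall>v\<in>A. u \<noteq> v \<longrightarrow> \<not> mdvd u v"
    and A_hom: "homogeneous_toric n A"
    and ord: "term_order (expansion n k A) lt"
    and GB: "is_reduced_GB lt (toric_ideal (expansion n k A)) G"
  shows "is_reduced_GB (\<lambda>m m'. lt (rename_mon exp_incl m) (rename_mon exp_incl m'))
           (toric_ideal A :: (((nat \<Rightarrow>\<^sub>0 nat) \<Rightarrow>\<^sub>0 nat) \<Rightarrow>\<^sub>0 'k) set)
           {p. poly_in A p \<and> rename_poly exp_incl p \<in> G}"
proof -
  let ?incl = "\<lambda>i::nat. (i, 1::nat)"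
  have incl: "exp_incl = rename_mon ?incl" by (simp add: fun_eq_iff exp_incl_def)
  have inj: "inj ?incl" by (simp add: inj_def)
  have image: "exp_incl ` A \<subseteq> expansion n k A"
    using exp_incl_image[OF alpha A_mons] by blast
  have "is_reduced_GB lt (toric_ideal (exp_incl ` A)) {g \<in> G. poly_in (exp_incl ` A) g}"
    unfolding exp_incl_image[OF alpha A_mons] by (rule is_reduced_GB_restrict[OF ord GB])
  then have "is_reduced_GB (\<lambda>m m'. lt (rename_mon exp_incl m) (rename_mon exp_incl m'))
      (toric_ideal A :: (((nat \<Rightarrow>\<^sub>0 nat) \<Rightarrow>\<^sub>0 nat) \<Rightarrow>\<^sub>0 'k) set)
      {p. poly_in A p \<and> rename_poly exp_incl p \<in> {g \<in> G. poly_in (exp_incl ` A) g}}"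
    unfolding incl by (rule is_reduced_GB_rename[OF inj term_order_subset[OF image[unfolded incl] ord]])
  moreover have "{p. poly_in A p \<and> rename_poly exp_incl p \<in> {g \<in> G. poly_in (exp_incl ` A) g}} =
      {p. poly_in A p \<and> rename_poly exp_incl p \<in> G}"
    using poly_in_pushforward[OF inj_pushforward[OF inj]]
    by (auto simp: incl rename_poly_eq_pushforward rename_mon_eq_pushforward)
  ultimately show ?thesis by simp
qed

end
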